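(* Let $X$ be a reflexive (respectively separable) Banach space and let $V$ be a non-reflexive (respectively non-separable) Banach space continuously embedded in $X$. Then there exists no linear and closed operator $A:D(A)\subset X\to X$ such that $D(A)=V$ and $\|\cdot\|_V$ is equivalent to $\|A\cdot\|_X$ on $V$. *)

theory Defs
  imports "HOL-Analysis.Analysis"
begin

definition reflexive_space :: "'a::real_normed_vector itself \<Rightarrow> bool" where
  "reflexive_space _ \<longleftrightarrow>
     (\<forall>\<Phi> :: ('a \<Rightarrow>\<^sub>L real) \<Rightarrow>\<^sub>L real. \<exists>x::'a. \<forall>f. blinfun_apply \<Phi> f = blinfun_apply f x)"

definition closed_linear_operator :: "'a::real_normed_vector set \<Rightarrow> ('a \<Rightarrow> 'a) \<Rightarrow> bool" where
  "closed_linear_operator D A \<longleftrightarrow>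
     subspace D \<and>
     (\<forall>x\<in>D. \<forall>y\<in>D. A (x + y) = A x + A y) \<and>
     (\<forall>x\<in>D. \<forall>c::real. A (c *\<^sub>R x) = c *\<^sub>R A x) \<and>
     closed {(x, A x) | x. x \<in> D}"

end

theory Submission
  imports Defs
begin

(* If such an A existed, T = A o j would be a bounded linear map from V to X that is bounded
   below, i.e. an isomorphism of V onto range T, which is closed in X because V is complete.
   Separability passes to subsets of a metric space and back along T.  For reflexivity, a
   functional on the dual of V induces one on the dual of X by precomposition with T, which
   X represents by some point y.  A Hahn-Banach functional separating y from the closed
   subspace range T shows that y = T x, and since by Hahn-Banach every functional on V
   factors through T, x represents the original functional. *)

definition sublinear :: "('a::real_vector \<Rightarrow> real) \<Rightarrow> bool" where
  "sublinear p \<longleftrightarrow> (\<forall>x y. p (x + y) \<le> p x + p y) \<and> (\<forall>t x. 0 \<le> t \<longrightarrow> p (t *\<^sub>R x) = t * p x)"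

(* Partial linear functionals are handled through their graphs in 'a \<times> real; such a
   subspace is automatically single-valued (dominated_subspace_single_valued). *)
definition dominated_subspace :: "('a::real_vector \<Rightarrow> real) \<Rightarrow> ('a \<times> real) set \<Rightarrow> bool" where
  "dominated_subspace p G \<longleftrightarrow> subspace G \<and> (\<forall>(x, a)\<in>G. a \<le> p x)"

lemma sublinear_zero: "sublinear p \<Longrightarrow> p 0 = 0"
  unfolding sublinear_def by (metis mult_zero_left order_refl scaleR_zero_left)

lemma sublinear_norm: "0 \<le> K \<Longrightarrow> sublinear (\<lambda>x. K * norm x)"
  unfolding sublinear_def
  by (auto simp flip: distrib_left intro: mult_left_mono norm_triangle_ineq)

lemma dominated_subspace_single_valued:
  assumes p: "sublinear p" and G: "dominated_subspace p G" and "(x, a) \<in> G" "(x, b) \<in> G"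
  shows "a = b"
proof -
  have sub: "subspace G" and le: "\<And>x a. (x, a) \<in> G \<Longrightarrow> a \<le> p x"
    using G by (auto simp: dominated_subspace_def)
  have "(x, a) - (x, b) \<in> G" "(x, b) - (x, a) \<in> G"
    using subspace_diff[OF sub] assms(3,4) by blast+
  then have "a - b \<le> p 0" "b - a \<le> p 0"
    by (auto dest: le)
  then show ?thesis
    using sublinear_zero[OF p] by linarith
qed

lemma subspace_Union_chain:
  assumes "\<C> \<noteq> {}" "subset.chain (Collect subspace) \<C>"
  shows "subspace (\<Union>\<C>)"
  unfolding subspace_def
proof (intro conjI ballI allI)
  show "0 \<in> \<Union>\<C>"
    using assms subspace_0 by (fastforce simp: subset_chain_def)
next
  fix x y assume "x \<in> \<Union>\<C>" "y \<in> \<Union>\<C>"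
  then obtain S T where "x \<in> S" "y \<in> T" "S \<in> \<C>" "T \<in> \<C>" by blast
  then show "x + y \<in> \<Union>\<C>"
    using assms(2) subspace_add unfolding subset_chain_def by (metis UnionI mem_Collect_eq subsetD)
next
  fix c x assume "x \<in> \<Union>\<C>"
  then show "c *\<^sub>R x \<in> \<Union>\<C>"
    using assms(2) subspace_scale unfolding subset_chain_def by blast
qed

(* The admissible values at x0 for extending G below p: c must dominate every a - p (y - x0)
   and be dominated by every p (z + x0) - b, and subadditivity makes this interval nonempty. *)
lemma dominated_subspace_extension_bounds:
  assumes p: "sublinear p" and G: "dominated_subspace p G"
  obtains c where "\<And>y a. (y, a) \<in> G \<Longrightarrow> a - p (y - x0) \<le> c"
    and "\<And>z b. (z, b) \<in> G \<Longrightarrow> c \<le> p (z + x0) - b"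
proof -
  define S where "S = {a - p (y - x0) | y a. (y, a) \<in> G}"
  have bound: "s \<le> p (z + x0) - b" if "s \<in> S" "(z, b) \<in> G" for s z b
  proof -
    obtain y a where s: "s = a - p (y - x0)" and ya: "(y, a) \<in> G"
      using \<open>s \<in> S\<close> by (auto simp: S_def)
    have "(y + z, a + b) \<in> G"
      using subspace_add[of G "(y, a)" "(z, b)"] G ya that(2) by (simp add: dominated_subspace_def)
    then have "a + b \<le> p (y + z)"
      using G by (auto simp: dominated_subspace_def)
    also have "\<dots> \<le> p (y - x0) + p (z + x0)"
      using p unfolding sublinear_def by (metis add.assoc diff_add_cancel add.commute)
    finally show ?thesis using s by linarith
  qed
  have "(0, 0) \<in> G"
    using G subspace_0[of G] by (simp add: dominated_subspace_def zero_prod_def)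
  then have "S \<noteq> {}" "bdd_above S"
    using bound[of _ 0 0] unfolding bdd_above_def by (auto simp: S_def)
  show ?thesis
  proof
    show "a - p (y - x0) \<le> Sup S" if "(y, a) \<in> G" for y a
      using \<open>bdd_above S\<close> that by (intro cSup_upper) (auto simp: S_def)
    show "Sup S \<le> p (z + x0) - b" if "(z, b) \<in> G" for z b
      using \<open>S \<noteq> {}\<close> bound that by (intro cSup_least) auto
  qed
qed

lemma dominated_subspace_one_step_extension:
  assumes p: "sublinear p" and G: "dominated_subspace p G"
  obtains c where "dominated_subspace p (span (insert (x0, c) G))"
proof -
  obtain c where lower: "\<And>y a. (y, a) \<in> G \<Longrightarrow> a - p (y - x0) \<le> c"
    and upper: "\<And>z b. (z, b) \<in> G \<Longrightarrow> c \<le> p (z + x0) - b"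
    using dominated_subspace_extension_bounds[OF p G] by metis
  have sub: "subspace G" and le: "\<And>x a. (x, a) \<in> G \<Longrightarrow> a \<le> p x"
    using G by (auto simp: dominated_subspace_def)
  have hom: "p (t *\<^sub>R x) = t * p x" if "0 \<le> t" for t x
    using p that by (simp add: sublinear_def)
  have scaled: "(r *\<^sub>R y, r * b) \<in> G" if "(y, b) \<in> G" for r y b
    using subspace_scale[OF sub that, of r] by simp
  have "a \<le> p z" if za: "(z, a) \<in> span (insert (x0, c) G)" for z a
  proof -
    obtain t where "(z, a) - t *\<^sub>R (x0, c) \<in> G"
      using za span_breakdown_eq[of "(z, a)" "(x0, c)" G] span_eq_iff[THEN iffD2, OF sub] by auto
    then have yb: "(z - t *\<^sub>R x0, a - t * c) \<in> G" by simp
    consider "t = 0" | "t > 0" | "t < 0" by linarith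
    then show ?thesis
    proof cases
      case 1
      then show ?thesis using le yb by simp
    next
      case 2
      have "c \<le> p ((1 / t) *\<^sub>R (z - t *\<^sub>R x0) + x0) - (1 / t) * (a - t * c)"
        using upper[OF scaled[OF yb]] .
      also have "\<dots> = (p z - a) / t + c"
        using 2 hom[of "1 / t" z] by (simp add: algebra_simps diff_divide_distrib)
      finally show ?thesis using 2 by (simp add: field_simps)
    next
      case 3
      have "(-1 / t) * (a - t * c) - p ((-1 / t) *\<^sub>R (z - t *\<^sub>R x0) - x0) \<le> c"
        using lower[OF scaled[OF yb]] .
      moreover have "p ((-1 / t) *\<^sub>R (z - t *\<^sub>R x0) - x0) = (-1 / t) * p z"
        using 3 hom[of "-1 / t" z] by (simp add: algebra_simps)
      ultimately show ?thesis using 3 by (simp add: field_simps)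
    qed
  qed
  then show ?thesis
    by (intro that[of c]) (auto simp: dominated_subspace_def)
qed

lemma total_dominated_subspace_is_graph:
  assumes p: "sublinear p" and G: "dominated_subspace p G" and total: "\<And>x. \<exists>a. (x, a) \<in> G"
  obtains g where "linear g" "\<And>x. (x, g x) \<in> G"
proof
  define g where "g x = (THE a. (x, a) \<in> G)" for x
  show graph: "(x, g x) \<in> G" for x
    unfolding g_def using total dominated_subspace_single_valued[OF p G]
    by (metis (no_types, lifting) theI)
  have sub: "subspace G"
    using G by (simp add: dominated_subspace_def)
  show "linear g"
  proof
    fix x y
    have "(x, g x) + (y, g y) \<in> G"
      using subspace_add[OF sub graph graph] .
    then show "g (x + y) = g x + g y"
      using dominated_subspace_single_valued[OF p G graph] by simp
  next
    fix r x
    have "r *\<^sub>R (x, g x) \<in> G"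
      using subspace_scale[OF sub graph] .
    then show "g (r *\<^sub>R x) = r *\<^sub>R g x"
      using dominated_subspace_single_valued[OF p G graph] by simp
  qed
qed

theorem Hahn_Banach_sublinear:
  assumes p: "sublinear p" and G0: "dominated_subspace p G0"
  obtains g where "linear g" "\<And>x. g x \<le> p x" "\<And>x a. (x, a) \<in> G0 \<Longrightarrow> g x = a"
proof -
  define \<A> where "\<A> = {G. dominated_subspace p G \<and> G0 \<subseteq> G}"
  have "\<exists>G\<in>\<A>. \<forall>H\<in>\<A>. G \<subseteq> H \<longrightarrow> H = G"
  proof (rule subset_Zorn_nonempty)
    show "\<A> \<noteq> {}"
      using G0 by (auto simp: \<A>_def)
  next
    fix \<C> assume \<C>: "\<C> \<noteq> {}" "subset.chain \<A> \<C>"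
    then have "subset.chain (Collect subspace) \<C>"
      by (auto simp: subset_chain_def \<A>_def dominated_subspace_def)
    then have "subspace (\<Union>\<C>)"
      using subspace_Union_chain \<C>(1) by blast
    then show "\<Union>\<C> \<in> \<A>"
      using \<C> by (fastforce simp: \<A>_def dominated_subspace_def subset_chain_def)
  qed
  then obtain G where G: "dominated_subspace p G" "G0 \<subseteq> G"
    and max: "\<And>H. dominated_subspace p H \<Longrightarrow> G \<subseteq> H \<Longrightarrow> H = G"
    by (auto simp: \<A>_def)
  have "\<exists>a. (x, a) \<in> G" for x
  proof -
    obtain c where "dominated_subspace p (span (insert (x, c) G))"
      using dominated_subspace_one_step_extension[OF p G(1)] .
    then have "span (insert (x, c) G) = G"
      using max span_superset by blast
    then show ?thesis
      using span_base[of "(x, c)" "insert (x, c) G"] by auto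
  qed
  then obtain g where "linear g" and graph: "\<And>x. (x, g x) \<in> G"
    using total_dominated_subspace_is_graph[OF p G(1)] by blast
  then show ?thesis
    using that G dominated_subspace_single_valued[OF p G(1) graph]
    by (fastforce simp: dominated_subspace_def)
qed

theorem Hahn_Banach_norm:
  fixes G0 :: "('a::real_normed_vector \<times> real) set"
  assumes sub: "subspace G0" and bound: "\<And>x a. (x, a) \<in> G0 \<Longrightarrow> a \<le> K * norm x"
  obtains g where "bounded_linear g" "\<And>x a. (x, a) \<in> G0 \<Longrightarrow> g x = a"
proof -
  define K' where "K' = max K 0"
  have p: "sublinear (\<lambda>x. K' * norm x)"
    by (rule sublinear_norm) (simp add: K'_def)
  have "dominated_subspace (\<lambda>x. K' * norm x) G0"
    using sub bound unfolding dominated_subspace_def K'_def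
    by (fastforce intro: order_trans[OF _ mult_right_mono])
  then obtain g where g: "linear g" "\<And>x. g x \<le> K' * norm x" "\<And>x a. (x, a) \<in> G0 \<Longrightarrow> g x = a"
    using Hahn_Banach_sublinear[OF p] by metis
  have "\<bar>g x\<bar> \<le> norm x * K'" for x
    using g(2)[of x] g(2)[of "- x"] linear_neg[OF g(1), of x] by (simp add: mult.commute)
  then have "bounded_linear g"
    using g(1) by (intro bounded_linear_intro[where K = K']) (auto simp: linear_add linear_scale)
  then show ?thesis
    using that g(3) by blast
qed

lemma closed_subspace_separated_by_functional:
  fixes W :: "'a::real_normed_vector set"
  assumes W: "subspace W" "closed W" and y: "y \<notin> W"
  obtains g :: "'a \<Rightarrow> real" where "bounded_linear g" "\<And>w. w \<in> W \<Longrightarrow> g w = 0" "g y = 1"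
proof -
  define d where "d = infdist y W"
  have "W \<noteq> {}"
    using subspace_0[OF W(1)] by blast
  then have d: "d > 0"
    unfolding d_def using infdist_pos_not_in_closed W(2) y by blast
  define G0 where "G0 = span (insert (y, 1 :: real) (W \<times> {0}))"
  have W0: "span (W \<times> {0 :: real}) = W \<times> {0}"
    using subspace_Times[OF W(1) subspace_single_0] by simp
  have "t \<le> 1 / d * norm x" if xt: "(x, t) \<in> G0" for x t
  proof (cases "t > 0")
    case True
    obtain k where "(x, t) - k *\<^sub>R (y, 1) \<in> W \<times> {0}"
      using xt span_breakdown_eq[of "(x, t)" "(y, 1)"] W0 unfolding G0_def by metis
    then have "x - t *\<^sub>R y \<in> W"
      by simp
    then have "(- 1 / t) *\<^sub>R (x - t *\<^sub>R y) \<in> W"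
      by (rule subspace_scale[OF W(1)])
    then have "d \<le> dist y ((- 1 / t) *\<^sub>R (x - t *\<^sub>R y))"
      unfolding d_def by (rule infdist_le)
    also have "\<dots> = norm x / t"
      using True by (simp add: dist_norm algebra_simps)
    finally show ?thesis
      using True d by (simp add: field_simps)
  next
    case False
    have "0 \<le> 1 / d * norm x"
      using d by simp
    then show ?thesis
      using False by linarith
  qed
  moreover have "subspace G0"
    by (simp add: G0_def)
  ultimately obtain g where "bounded_linear g" and g: "\<And>x t. (x, t) \<in> G0 \<Longrightarrow> g x = t"
    using Hahn_Banach_norm by blast
  show ?thesis
  proof (rule that)
    show "bounded_linear g" by fact
    show "g w = 0" if "w \<in> W" for w
      using that by (intro g) (simp add: G0_def span_base)
    show "g y = 1"
      by (intro g) (simp add: G0_def span_base)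
  qed
qed

lemma bounded_below_dist:
  assumes "linear T" and "\<And>v. c * norm v \<le> norm (T v)"
  shows "c * dist u v \<le> dist (T u) (T v)"
  using assms(2)[of "u - v"] by (simp add: dist_norm linear_diff[OF assms(1)])

lemma bounded_below_closed_range:
  fixes T :: "'v::banach \<Rightarrow> 'x::real_normed_vector"
  assumes "bounded_linear T" "c > 0" "\<And>v. c * norm v \<le> norm (T v)"
  shows "closed (range T)"
proof (rule complete_imp_closed)
  show "complete (range T)"
    using complete_isometric_image[OF assms(2) subspace_UNIV assms(1)] assms(3) complete_UNIV
    by blast
qed

lemma separable_space_countable_dense_subset:
  fixes S :: "'a::metric_space set"
  assumes "separable_space (euclidean :: 'a topology)"
  obtains E where "E \<subseteq> S" "countable E" "S \<subseteq> closure E"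
proof -
  obtain D :: "'a set" where D: "countable D" "closure D = UNIV"
    using assms unfolding separable_space_def by auto
  define near where "near d n = {s \<in> S. dist s d < 1 / Suc n}" for d n
  define pick where "pick = (\<lambda>(d, n). SOME s. s \<in> near d n)"
  define E where "E = pick ` {(d, n). d \<in> D \<and> near d n \<noteq> {}}"
  have pick: "pick (d, n) \<in> near d n" if "near d n \<noteq> {}" for d n
    using that unfolding pick_def by (simp add: some_in_eq)
  have "countable (D \<times> (UNIV :: nat set))"
    using D(1) by simp
  then have "countable {(d, n). d \<in> D \<and> near d n \<noteq> {}}"
    by (rule countable_subset[rotated]) auto
  then have "countable E"
    unfolding E_def by (rule countable_image)
  moreover have "E \<subseteq> S"
    using pick unfolding E_def near_def by blast
  moreover have "x \<in> closure E" if "x \<in> S" for x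
    unfolding closure_approachable
  proof (intro allI impI)
    fix e :: real assume "e > 0"
    then obtain n :: nat where "inverse (Suc n) < e / 2"
      using reals_Archimedean[of "e / 2"] by auto
    then have n: "1 / Suc n < e / 2"
      by (simp add: inverse_eq_divide)
    obtain d where d: "d \<in> D" "dist d x < 1 / Suc n"
      using D(2) closure_approachable[of x D] of_nat_0_less_iff zero_less_Suc zero_less_divide_1_iff
      by blast
    then have "x \<in> near d n"
      using \<open>x \<in> S\<close> by (simp add: near_def dist_commute)
    then have "near d n \<noteq> {}"
      by blast
    then have "pick (d, n) \<in> E" "dist (pick (d, n)) d < 1 / Suc n"
      using pick[of d n] d(1) unfolding E_def near_def by blast+
    moreover have "dist (pick (d, n)) x \<le> dist (pick (d, n)) d + dist d x"
      by (rule dist_triangle)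
    ultimately show "\<exists>y\<in>E. dist y x < e"
      using d(2) n by (intro bexI[of _ "pick (d, n)"]) auto
  qed
  ultimately show ?thesis
    using that by blast
qed

lemma separable_space_if_bounded_below_map:
  fixes T :: "'v::real_normed_vector \<Rightarrow> 'x::real_normed_vector"
  assumes T: "linear T" and c: "c > 0" and lb: "\<And>v. c * norm v \<le> norm (T v)"
    and "separable_space (euclidean :: 'x topology)"
  shows "separable_space (euclidean :: 'v topology)"
proof -
  obtain E where E: "E \<subseteq> range T" "countable E" "range T \<subseteq> closure E"
    using separable_space_countable_dense_subset assms(4) by blast
  have "v \<in> closure (inv T ` E)" for v
    unfolding closure_approachable
  proof (intro allI impI)
    fix e :: real assume "e > 0"
    moreover have "T v \<in> closure E"
      using E(3) by blast
    ultimately obtain w where w: "w \<in> E" "dist w (T v) < c * e"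
      using c closure_approachable[of "T v" E] mult_pos_pos by blast
    then have "T (inv T w) = w"
      using E(1) by (auto simp: f_inv_into_f)
    then have "c * dist (inv T w) v < c * e"
      using bounded_below_dist[OF T lb, of "inv T w" v] w(2) by simp
    then show "\<exists>u\<in>inv T ` E. dist u v < e"
      using w(1) c by auto
  qed
  then show ?thesis
    unfolding separable_space_def using E(2) by auto
qed

lemma functional_extension_along_bounded_below_map:
  fixes T :: "'v::real_normed_vector \<Rightarrow> 'x::real_normed_vector"
  assumes T: "bounded_linear T" and c: "c > 0" and lb: "\<And>v. c * norm v \<le> norm (T v)"
    and f: "bounded_linear (f :: 'v \<Rightarrow> real)"
  obtains g :: "'x \<Rightarrow> real" where "bounded_linear g" "\<And>v. g (T v) = f v"
proof -
  define G0 where "G0 = range (\<lambda>v. (T v, f v))"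
  obtain K where K: "K > 0" "\<And>v. norm (f v) \<le> norm v * K"
    using bounded_linear.pos_bounded[OF f] by blast
  have "linear (\<lambda>v. (T v, f v))"
    using bounded_linear_Pair[OF T f] by (rule bounded_linear.linear)
  then have sub: "subspace G0"
    unfolding G0_def using subspace_UNIV by (rule linear_subspace_image)
  have bound: "a \<le> K / c * norm x" if xa: "(x, a) \<in> G0" for x a
  proof -
    obtain v where v: "x = T v" "a = f v"
      using xa by (auto simp: G0_def)
    have "f v \<le> K * norm v"
      using K(2)[of v] by (simp add: mult.commute)
    also have "\<dots> = K / c * (c * norm v)"
      using c by simp
    also have "\<dots> \<le> K / c * norm (T v)"
      using lb[of v] K(1) c by (intro mult_left_mono) auto
    finally show ?thesis
      using v by simp
  qed
  obtain g where "bounded_linear g" "\<And>x a. (x, a) \<in> G0 \<Longrightarrow> g x = a"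
    using Hahn_Banach_norm[OF sub bound] by blast
  then show ?thesis
    using that unfolding G0_def by blast
qed

lemma reflexive_space_if_bounded_below_map:
  fixes T :: "'v::banach \<Rightarrow> 'x::real_normed_vector"
  assumes T: "bounded_linear T" and c: "c > 0" and lb: "\<And>v. c * norm v \<le> norm (T v)"
    and "reflexive_space TYPE('x)"
  shows "reflexive_space TYPE('v)"
  unfolding reflexive_space_def
proof
  fix \<Phi> :: "('v \<Rightarrow>\<^sub>L real) \<Rightarrow>\<^sub>L real"
  define \<Psi> where "\<Psi> = Blinfun (\<lambda>g :: 'x \<Rightarrow>\<^sub>L real. \<Phi> (g o\<^sub>L Blinfun T))"
  have "bounded_linear (\<lambda>g :: 'x \<Rightarrow>\<^sub>L real. \<Phi> (g o\<^sub>L Blinfun T))"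
    by (rule bounded_linear_compose[OF blinfun.bounded_linear_right
          bounded_bilinear.bounded_linear_left[OF bounded_bilinear_blinfun_compose]])
  then have \<Psi>: "\<Psi> g = \<Phi> (g o\<^sub>L Blinfun T)" for g
    by (simp add: \<Psi>_def bounded_linear_Blinfun_apply)
  obtain y where y: "\<And>g. \<Psi> g = g y"
    using assms(4) unfolding reflexive_space_def by blast
  have "y \<in> range T"
  proof (rule ccontr)
    assume y_notin: "y \<notin> range T"
    have "subspace (range T)"
      using bounded_linear.linear[OF T] subspace_UNIV by (rule linear_subspace_image)
    then obtain g :: "'x \<Rightarrow> real"
      where g: "bounded_linear g" "\<And>w. w \<in> range T \<Longrightarrow> g w = 0" "g y = 1"
      using closed_subspace_separated_by_functional[OF _ bounded_below_closed_range[OF T c lb] y_notin]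
      by blast
    have "Blinfun g o\<^sub>L Blinfun T = 0"
      using g T by (intro blinfun_eqI) (simp add: bounded_linear_Blinfun_apply)
    then have "\<Psi> (Blinfun g) = 0"
      by (simp add: \<Psi>)
    then show False
      using y g by (simp add: bounded_linear_Blinfun_apply)
  qed
  then obtain x where x: "y = T x"
    by blast
  show "\<exists>x. \<forall>f. \<Phi> f = f x"
  proof (intro exI allI)
    fix f :: "'v \<Rightarrow>\<^sub>L real"
    obtain g where g: "bounded_linear g" "\<And>v. g (T v) = f v"
      using functional_extension_along_bounded_below_map[OF T c lb blinfun.bounded_linear_right[of f]]
      by blast
    have "Blinfun g o\<^sub>L Blinfun T = f"
      using g T by (intro blinfun_eqI) (simp add: bounded_linear_Blinfun_apply)
    then have "\<Phi> f = \<Psi> (Blinfun g)"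
      by (simp add: \<Psi>)
    also have "\<dots> = f x"
      using y x g by (simp add: bounded_linear_Blinfun_apply)
    finally show "\<Phi> f = f x" .
  qed
qed

lemma bounded_linear_comp_closed_linear_operator:
  assumes A: "closed_linear_operator (range j) A" and j: "linear j"
    and bound: "\<And>v. norm (A (j v)) \<le> C * norm v"
  shows "bounded_linear (A \<circ> j)"
proof (rule bounded_linear_intro[where K = C])
  show "(A \<circ> j) (u + v) = (A \<circ> j) u + (A \<circ> j) v" for u v
    using A by (simp add: closed_linear_operator_def linear_add[OF j])
  show "(A \<circ> j) (r *\<^sub>R v) = r *\<^sub>R (A \<circ> j) v" for r v
    using A by (simp add: closed_linear_operator_def linear_scale[OF j])
  show "norm ((A \<circ> j) v) \<le> norm v * C" for v
    using bound[of v] by (simp add: mult.commute)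
qed

theorem lemma6:
  fixes j :: "'v::banach \<Rightarrow> 'x::banach"
  assumes emb: "bounded_linear j" "inj j"
    and cases: "(reflexive_space TYPE('x) \<and> \<not> reflexive_space TYPE('v)) \<or>
                (separable_space (euclidean :: 'x topology) \<and>
                 \<not> separable_space (euclidean :: 'v topology))"
  shows "\<not> (\<exists>A :: 'x \<Rightarrow> 'x. closed_linear_operator (range j) A \<and>
             (\<exists>c>0. \<exists>C>0. \<forall>v. c * norm v \<le> norm (A (j v)) \<and> norm (A (j v)) \<le> C * norm v))"
proof (intro notI, elim exE conjE)
  fix A c C
  assume A: "closed_linear_operator (range j) A" and c: "c > 0" and "C > 0"
    and bounds: "\<forall>v. c * norm v \<le> norm (A (j v)) \<and> norm (A (j v)) \<le> C * norm v"
  have T: "bounded_linear (A \<circ> j)"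
    by (rule bounded_linear_comp_closed_linear_operator[OF A bounded_linear.linear[OF emb(1)]])
      (use bounds in blast)
  have lb: "c * norm v \<le> norm ((A \<circ> j) v)" for v
    using bounds by simp
  show False
    using cases reflexive_space_if_bounded_below_map[OF T c lb]
      separable_space_if_bounded_below_map[OF bounded_linear.linear[OF T] c lb]
    by blast
qed

end
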